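(* Let $T$ and $S$ be binary search trees on the same finite set of keys, with nodes identified via their keys, and let $v$ be a node. Splaying $v$ in $S$ (while $T$ stays fixed) has amortized cost at most $4+6\,d_T(v)$, where $d_T(v)$ is the depth of $v$ in $T$.
   Context: Splaying a node $x$ in $S$ repeatedly applies the following steps until $x$ is the root, where $y$ is the parent and $z$ the grandparent of $x$: Zig (if $y$ is the root, rotate $x$ over $y$); ZigZig (if $x$ and $y$ are both left children or both right children, rotate $y$ over $z$ and then $x$ over $y$); ZigZag (otherwise, rotate $x$ over $y$ and then $x$ over $z$). The actual cost of a Zig step is $1$ and of a ZigZig or ZigZag step is $2$ (so the actual cost of splaying equals the depth of $x$ in $S$). Potential: for every node $u$, $w_T(u)=1/4^{d_T(u)}$ where $d_T(u)$ is the depth of $u$ in $T$ (root has depth $0$), $w(u)=w_T(u)$; $s_T(u)$ (resp. $s(u)$) is the sum of weights in the subtree of $u$ in $T$ (resp. $S$), including $u$; $r_T(u)=\log_2 s_T(u)$, $r(u)=\log_2 s(u)$; $P(T)=\sum_u r_T(u)$, $P(S)=\sum_u r(u)$ and $\Phi=P(S)-P(T)$. The amortized cost of an operation is its actual cost plus $\Phi_{\text{after}}-\Phi_{\text{before}}$. *)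

theory Defs
  imports Complex_Main "HOL-Library.Tree"
begin

fun key_depth :: "'a::linorder tree \<Rightarrow> 'a \<Rightarrow> nat" where
  "key_depth Leaf x = 0"
| "key_depth (Node l a r) x =
     (if x = a then 0 else if x < a then Suc (key_depth l x) else Suc (key_depth r x))"

fun subtree_at :: "'a::linorder tree \<Rightarrow> 'a \<Rightarrow> 'a tree" where
  "subtree_at Leaf x = Leaf"
| "subtree_at (Node l a r) x =
     (if x = a then Node l a r else if x < a then subtree_at l x else subtree_at r x)"

fun rot_right :: "'a tree \<Rightarrow> 'a tree" where
  "rot_right (Node (Node A x B) y C) = Node A x (Node B y C)"
| "rot_right t = t"

fun rot_left :: "'a tree \<Rightarrow> 'a tree" where
  "rot_left (Node A y (Node B x C)) = Node (Node A y B) x C"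
| "rot_left t = t"

(* Bottom-up splaying of x when x is at EVEN depth in the current tree:
   only ZigZig / ZigZag steps occur.  The steps performed while x is below
   the grandchild g of the root all happen inside the subtree of g, and they
   are exactly the splaying of x inside that subtree; the final step is the
   ZigZig / ZigZag with grandparent = root. *)
fun splay_even :: "'a::linorder \<Rightarrow> 'a tree \<Rightarrow> 'a tree" where
  "splay_even x Leaf = Leaf"
| "splay_even x (Node l a r) =
    (if x = a then Node l a r
     else if x < a then
       (case l of
          Leaf \<Rightarrow> Node l a r
        | Node ll b lr \<Rightarrow>
            (if x = b then Node l a r
             else if x < b then
               \<comment> \<open>ZigZig: rotate b over a, then x over b\<close>
               rot_right (rot_right (Node (Node (splay_even x ll) b lr) a r))
             else
               \<comment> \<open>ZigZag: rotate x over b, then x over a\<close>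
               rot_right (Node (rot_left (Node ll b (splay_even x lr))) a r)))
     else
       (case r of
          Leaf \<Rightarrow> Node l a r
        | Node rl b rr \<Rightarrow>
            (if x = b then Node l a r
             else if b < x then
               \<comment> \<open>ZigZig\<close>
               rot_left (rot_left (Node l a (Node rl b (splay_even x rr))))
             else
               \<comment> \<open>ZigZag\<close>
               rot_left (Node l a (rot_right (Node (splay_even x rl) b rr))))))"

fun splay :: "'a::linorder \<Rightarrow> 'a tree \<Rightarrow> 'a tree" where
  "splay x Leaf = Leaf"
| "splay x (Node l a r) =
    (if even (key_depth (Node l a r) x) then splay_even x (Node l a r)
     else if x < a then rot_right (Node (splay_even x l) a r)
     else rot_left (Node l a (splay_even x r)))"

definition weight :: "'a::linorder tree \<Rightarrow> 'a \<Rightarrow> real" where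
  "weight T u = 1 / 4 ^ key_depth T u"

definition wsize :: "'a::linorder tree \<Rightarrow> 'a tree \<Rightarrow> 'a \<Rightarrow> real" where
  "wsize T X u = (\<Sum>y\<in>set_tree (subtree_at X u). weight T y)"

definition pot :: "'a::linorder tree \<Rightarrow> 'a tree \<Rightarrow> real" where
  "pot T X = (\<Sum>u\<in>set_tree X. log 2 (wsize T X u))"

definition Phi :: "'a::linorder tree \<Rightarrow> 'a tree \<Rightarrow> real" where
  "Phi T S = pot T S - pot T T"

(* actual cost of splaying v in S = depth of v in S *)
definition splay_amortized_cost :: "'a::linorder tree \<Rightarrow> 'a tree \<Rightarrow> 'a \<Rightarrow> real" where
  "splay_amortized_cost T S v = real (key_depth S v) + (Phi T (splay v S) - Phi T S)"

end

theory Submission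
  imports Defs
begin

(*
  This is Sleator and Tarjan's access lemma for the weights w(u) = 1/4^(d_T(u)). As P(T) is a
  constant, only the change of P(S) counts. By the concavity inequality
  log a + log b + 2 <= 2 log (a + b), a ZigZig or ZigZag step on x has amortized cost at most
  3 (r'(x) - r(x)) and a Zig step at most 1 + r'(x) - r(x); these telescope to
  1 + 3 (r(root) - r(v)). The weights of T sum to at most 1 + 2/4 + 4/16 + ... = 2, so
  r(root) <= 1, while r(v) >= log w(v) = -2 d_T(v), which gives 1 + 3 (1 + 2 d_T(v)).
*)

(* Weights are summed along the in-order list, so rotations visibly preserve them;
   for a BST this is the sum over its key set (tree_weight_eq_sum). *)
definition tree_weight :: "('a \<Rightarrow> real) \<Rightarrow> 'a tree \<Rightarrow> real" where
  "tree_weight w t = sum_list (map w (inorder t))"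

fun potential :: "('a \<Rightarrow> real) \<Rightarrow> 'a tree \<Rightarrow> real" where
  "potential w Leaf = 0"
| "potential w (Node l a r) = potential w l + potential w r + log 2 (tree_weight w (Node l a r))"

lemma inorder_rot_right [simp]: "inorder (rot_right t) = inorder t"
  by (cases t rule: rot_right.cases) auto

lemma inorder_rot_left [simp]: "inorder (rot_left t) = inorder t"
  by (cases t rule: rot_left.cases) auto

lemma inorder_splay_even [simp]: "inorder (splay_even x t) = inorder t"
  by (induction x t rule: splay_even.induct) (auto split: tree.split)

lemma splay_even_eq_Leaf_iff [simp]: "splay_even x t = Leaf \<longleftrightarrow> t = Leaf"
  by (metis eq_inorder_Nil inorder_splay_even)

lemma inorder_splay [simp]: "inorder (splay x t) = inorder t"
  by (cases t) (simp_all del: splay_even.simps)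

lemma tree_weight_simps [simp]:
  "tree_weight w Leaf = 0"
  "tree_weight w (Node l a r) = tree_weight w l + w a + tree_weight w r"
  by (simp_all add: tree_weight_def)

lemma log2_add_log2_le:
  fixes a b c :: real
  assumes "0 < a" "0 < b" "a + b \<le> c"
  shows "log 2 a + log 2 b + 2 \<le> 2 * log 2 c"
proof -
  have "4 * a * b \<le> (a + b)\<^sup>2"
    using sum_squares_ge_zero[of "a - b" 0] by (simp add: power2_eq_square algebra_simps)
  also have "\<dots> \<le> c\<^sup>2"
    using assms by (intro power_mono) auto
  finally have "log 2 (4 * (a * b)) \<le> log 2 (c\<^sup>2)"
    using assms by (simp add: mult.assoc)
  moreover have "log 2 (4 * (a * b)) = 2 + log 2 a + log 2 b"
    using assms log_pow_cancel[of "2::real" 2] by (simp add: log_mult)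
  ultimately show ?thesis
    using assms by (simp add: log_nat_power)
qed

(* In a double rotation with total weight W, the node x is splayed out of a subtree of weight s
   whose old parent has weight c, and u, v are the weights of the two nodes that end up below x. *)
lemma zig_zig_log_bound:
  fixes s c u v W :: real
  assumes "0 < s" "s \<le> c" "0 < u" "u \<le> W" "0 < v" "s + v \<le> W"
  shows "log 2 u + log 2 v - log 2 c + 2 \<le> 3 * log 2 W - 2 * log 2 s"
proof -
  have "log 2 s + log 2 v + 2 \<le> 2 * log 2 W"
    using log2_add_log2_le[of s v W] assms by simp
  moreover have "log 2 u \<le> log 2 W" "log 2 s \<le> log 2 c"
    using assms by simp_all
  ultimately show ?thesis by linarith
qed

lemma zig_zag_log_bound:
  fixes s c u v W :: real
  assumes "0 < s" "s \<le> c" "s \<le> W" "0 < u" "0 < v" "u + v \<le> W"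
  shows "log 2 u + log 2 v - log 2 c + 2 \<le> 3 * log 2 W - 2 * log 2 s"
proof -
  have "log 2 u + log 2 v + 2 \<le> 2 * log 2 W"
    using log2_add_log2_le[of u v W] assms by simp
  moreover have "log 2 s \<le> log 2 W" "log 2 s \<le> log 2 c"
    using assms by simp_all
  ultimately show ?thesis by linarith
qed

context
  fixes w :: "'a::linorder \<Rightarrow> real"
  assumes w_pos: "\<And>y. 0 < w y"
begin

abbreviation rank :: "'a tree \<Rightarrow> real" where
  "rank t \<equiv> log 2 (tree_weight w t)"

lemma tree_weight_nonneg: "0 \<le> tree_weight w t"
  by (induction t) (auto intro: add_nonneg_nonneg less_imp_le w_pos)

lemma tree_weight_Node_pos: "0 < tree_weight w (Node l a r)"
  by (simp add: add_nonneg_pos add_pos_nonneg tree_weight_nonneg w_pos)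

lemma zig_zig_left:
  assumes keys: "inorder (Node A y B) = inorder ll"
    and sub: "potential w (Node A y B) - potential w ll + d \<le> 3 * (rank ll - log 2 (w x))"
  shows "potential w (Node A y (Node B b (Node lr a r))) - potential w (Node (Node ll b lr) a r) + (d + 2)
    \<le> 3 * (rank (Node (Node ll b lr) a r) - log 2 (w x))"
proof -
  have weight: "tree_weight w ll = tree_weight w (Node A y B)"
    using keys by (simp only: tree_weight_def)
  have total:
      "tree_weight w (Node A y (Node B b (Node lr a r))) = tree_weight w (Node (Node ll b lr) a r)"
    using weight by simp
  have "rank (Node B b (Node lr a r)) + rank (Node lr a r) - rank (Node ll b lr) + 2
      \<le> 3 * rank (Node (Node ll b lr) a r) - 2 * rank ll"
    using weight tree_weight_nonneg[of A] tree_weight_nonneg[of B] tree_weight_nonneg[of lr]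
      tree_weight_nonneg[of r] w_pos[of y] w_pos[of a] w_pos[of b]
    by (intro zig_zig_log_bound) simp_all
  with sub show ?thesis
    unfolding potential.simps total weight by argo
qed

lemma zig_zag_left:
  assumes keys: "inorder (Node A y B) = inorder lr"
    and sub: "potential w (Node A y B) - potential w lr + d \<le> 3 * (rank lr - log 2 (w x))"
  shows "potential w (Node (Node ll b A) y (Node B a r)) - potential w (Node (Node ll b lr) a r) + (d + 2)
    \<le> 3 * (rank (Node (Node ll b lr) a r) - log 2 (w x))"
proof -
  have weight: "tree_weight w lr = tree_weight w (Node A y B)"
    using keys by (simp only: tree_weight_def)
  have total:
      "tree_weight w (Node (Node ll b A) y (Node B a r)) = tree_weight w (Node (Node ll b lr) a r)"
    using weight by simp
  have "rank (Node ll b A) + rank (Node B a r) - rank (Node ll b lr) + 2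
      \<le> 3 * rank (Node (Node ll b lr) a r) - 2 * rank lr"
    using weight tree_weight_nonneg[of A] tree_weight_nonneg[of B] tree_weight_nonneg[of ll]
      tree_weight_nonneg[of r] w_pos[of y] w_pos[of a] w_pos[of b]
    by (intro zig_zag_log_bound) simp_all
  with sub show ?thesis
    unfolding potential.simps total weight by argo
qed

lemma zig_zig_right:
  assumes keys: "inorder (Node A y B) = inorder rr"
    and sub: "potential w (Node A y B) - potential w rr + d \<le> 3 * (rank rr - log 2 (w x))"
  shows "potential w (Node (Node (Node l a rl) b A) y B) - potential w (Node l a (Node rl b rr)) + (d + 2)
    \<le> 3 * (rank (Node l a (Node rl b rr)) - log 2 (w x))"
proof -
  have weight: "tree_weight w rr = tree_weight w (Node A y B)"
    using keys by (simp only: tree_weight_def)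
  have total:
      "tree_weight w (Node (Node (Node l a rl) b A) y B) = tree_weight w (Node l a (Node rl b rr))"
    using weight by simp
  have "rank (Node (Node l a rl) b A) + rank (Node l a rl) - rank (Node rl b rr) + 2
      \<le> 3 * rank (Node l a (Node rl b rr)) - 2 * rank rr"
    using weight tree_weight_nonneg[of A] tree_weight_nonneg[of B] tree_weight_nonneg[of l]
      tree_weight_nonneg[of rl] w_pos[of y] w_pos[of a] w_pos[of b]
    by (intro zig_zig_log_bound) simp_all
  with sub show ?thesis
    unfolding potential.simps total weight by argo
qed

lemma zig_zag_right:
  assumes keys: "inorder (Node A y B) = inorder rl"
    and sub: "potential w (Node A y B) - potential w rl + d \<le> 3 * (rank rl - log 2 (w x))"
  shows "potential w (Node (Node l a A) y (Node B b rr)) - potential w (Node l a (Node rl b rr)) + (d + 2)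
    \<le> 3 * (rank (Node l a (Node rl b rr)) - log 2 (w x))"
proof -
  have weight: "tree_weight w rl = tree_weight w (Node A y B)"
    using keys by (simp only: tree_weight_def)
  have total:
      "tree_weight w (Node (Node l a A) y (Node B b rr)) = tree_weight w (Node l a (Node rl b rr))"
    using weight by simp
  have "rank (Node l a A) + rank (Node B b rr) - rank (Node rl b rr) + 2
      \<le> 3 * rank (Node l a (Node rl b rr)) - 2 * rank rl"
    using weight tree_weight_nonneg[of A] tree_weight_nonneg[of B] tree_weight_nonneg[of l]
      tree_weight_nonneg[of rr] w_pos[of y] w_pos[of a] w_pos[of b]
    by (intro zig_zag_log_bound) simp_all
  with sub show ?thesis
    unfolding potential.simps total weight by argo
qed

lemma zig_left:
  assumes keys: "inorder (Node A y B) = inorder l"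
    and sub: "potential w (Node A y B) - potential w l + d \<le> 3 * (rank l - log 2 (w x))"
  shows "potential w (Node A y (Node B a r)) - potential w (Node l a r) + (d + 1)
    \<le> 1 + 3 * (rank (Node l a r) - log 2 (w x))"
proof -
  have weight: "tree_weight w l = tree_weight w (Node A y B)"
    using keys by (simp only: tree_weight_def)
  have total:
      "tree_weight w (Node A y (Node B a r)) = tree_weight w (Node l a r)"
    using weight by simp
  have "rank (Node B a r) \<le> rank (Node l a r)" "rank l \<le> rank (Node l a r)"
    using weight tree_weight_nonneg[of A] tree_weight_nonneg[of B] tree_weight_nonneg[of r]
      w_pos[of y] w_pos[of a]
    by simp_all
  with sub show ?thesis
    unfolding potential.simps total weight by argo
qed

lemma zig_right:
  assumes keys: "inorder (Node A y B) = inorder r"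
    and sub: "potential w (Node A y B) - potential w r + d \<le> 3 * (rank r - log 2 (w x))"
  shows "potential w (Node (Node l a A) y B) - potential w (Node l a r) + (d + 1)
    \<le> 1 + 3 * (rank (Node l a r) - log 2 (w x))"
proof -
  have weight: "tree_weight w r = tree_weight w (Node A y B)"
    using keys by (simp only: tree_weight_def)
  have total:
      "tree_weight w (Node (Node l a A) y B) = tree_weight w (Node l a r)"
    using weight by simp
  have "rank (Node l a A) \<le> rank (Node l a r)" "rank r \<le> rank (Node l a r)"
    using weight tree_weight_nonneg[of A] tree_weight_nonneg[of B] tree_weight_nonneg[of l]
      w_pos[of y] w_pos[of a]
    by simp_all
  with sub show ?thesis
    unfolding potential.simps total weight by argo
qed

lemma splay_even_access:
  "bst t \<Longrightarrow> x \<in> set_tree t \<Longrightarrow> even (key_depth t x) \<Longrightarrow>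
    potential w (splay_even x t) - potential w t + key_depth t x \<le> 3 * (rank t - log 2 (w x))"
proof (induction x t rule: splay_even.induct)
  case (2 x l a r)
  consider (root) "x = a" | (left) "x \<noteq> a" "x < a" | (right) "x \<noteq> a" "\<not> x < a" "a < x"
    by fastforce
  then show ?case
  proof cases
    case root
    have "w x \<le> tree_weight w (Node l a r)"
      using root tree_weight_nonneg[of l] tree_weight_nonneg[of r] by simp
    then show ?thesis
      using root w_pos[of x] by simp
  next
    case left
    with "2.prems" obtain ll b lr where l: "l = Node ll b lr" and "x \<noteq> b"
      by (cases l) (auto split: if_split_asm)
    consider (ll) "x < b" | (lr) "\<not> x < b" "b < x"
      using \<open>x \<noteq> b\<close> by fastforce
    then show ?thesis
    proof cases
      case ll
      with left l \<open>x \<noteq> b\<close> "2.prems" have "bst ll" "x \<in> set_tree ll" "even (key_depth ll x)"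
        by auto
      note IH = "2.IH"(1)[OF left l \<open>x \<noteq> b\<close> ll this]
      obtain A y B where S: "splay_even x ll = Node A y B"
        using \<open>x \<in> set_tree ll\<close> by (cases "splay_even x ll") auto
      from zig_zig_left[OF inorder_splay_even[of x ll, unfolded S] IH[unfolded S], of b lr a r]
      show ?thesis
        using left l \<open>x \<noteq> b\<close> ll S by simp
    next
      case lr
      with left l \<open>x \<noteq> b\<close> "2.prems" have "bst lr" "x \<in> set_tree lr" "even (key_depth lr x)"
        by auto
      note IH = "2.IH"(2)[OF left l \<open>x \<noteq> b\<close> lr(1) this]
      obtain A y B where S: "splay_even x lr = Node A y B"
        using \<open>x \<in> set_tree lr\<close> by (cases "splay_even x lr") auto
      from zig_zag_left[OF inorder_splay_even[of x lr, unfolded S] IH[unfolded S], of ll b a r]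
      show ?thesis
        using left l \<open>x \<noteq> b\<close> lr S by simp
    qed
  next
    case right
    with "2.prems" obtain rl b rr where r: "r = Node rl b rr" and "x \<noteq> b"
      by (cases r) (auto split: if_split_asm)
    consider (rr) "b < x" "\<not> x < b" | (rl) "\<not> b < x" "x < b"
      using \<open>x \<noteq> b\<close> by fastforce
    then show ?thesis
    proof cases
      case rr
      with right r \<open>x \<noteq> b\<close> "2.prems" have "bst rr" "x \<in> set_tree rr" "even (key_depth rr x)"
        by auto
      note IH = "2.IH"(3)[OF right(1,2) r \<open>x \<noteq> b\<close> rr(1) this]
      obtain A y B where S: "splay_even x rr = Node A y B"
        using \<open>x \<in> set_tree rr\<close> by (cases "splay_even x rr") auto
      from zig_zig_right[OF inorder_splay_even[of x rr, unfolded S] IH[unfolded S], of l a rl b]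
      show ?thesis
        using right r \<open>x \<noteq> b\<close> rr S by simp
    next
      case rl
      with right r \<open>x \<noteq> b\<close> "2.prems" have "bst rl" "x \<in> set_tree rl" "even (key_depth rl x)"
        by auto
      note IH = "2.IH"(4)[OF right(1,2) r \<open>x \<noteq> b\<close> rl(1) this]
      obtain A y B where S: "splay_even x rl = Node A y B"
        using \<open>x \<in> set_tree rl\<close> by (cases "splay_even x rl") auto
      from zig_zag_right[OF inorder_splay_even[of x rl, unfolded S] IH[unfolded S], of l a b rr]
      show ?thesis
        using right r \<open>x \<noteq> b\<close> rl S by simp
    qed
  qed
qed simp

lemma splay_access:
  assumes "bst t" "x \<in> set_tree t"
  shows "potential w (splay x t) - potential w t + key_depth t x \<le> 1 + 3 * (rank t - log 2 (w x))"
proof (cases "even (key_depth t x)")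
  case True
  with assms splay_even_access[of t x] show ?thesis
    by (cases t) auto
next
  case False
  with assms obtain l a r where t: "t = Node l a r" and "x \<noteq> a"
    by (cases t) auto
  consider (left) "x < a" | (right) "\<not> x < a" "a < x"
    using \<open>x \<noteq> a\<close> by fastforce
  then show ?thesis
  proof cases
    case left
    with t \<open>x \<noteq> a\<close> False assms have "bst l" "x \<in> set_tree l" "even (key_depth l x)"
      by auto
    note sub = splay_even_access[OF this]
    obtain A y B where S: "splay_even x l = Node A y B"
      using \<open>x \<in> set_tree l\<close> by (cases "splay_even x l") auto
    from zig_left[OF inorder_splay_even[of x l, unfolded S] sub[unfolded S], of a r]
    show ?thesis
      using t \<open>x \<noteq> a\<close> False left S by simp
  next
    case right
    with t \<open>x \<noteq> a\<close> False assms have "bst r" "x \<in> set_tree r" "even (key_depth r x)"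
      by auto
    note sub = splay_even_access[OF this]
    obtain A y B where S: "splay_even x r = Node A y B"
      using \<open>x \<in> set_tree r\<close> by (cases "splay_even x r") auto
    from zig_right[OF inorder_splay_even[of x r, unfolded S] sub[unfolded S], of l a]
    show ?thesis
      using t \<open>x \<noteq> a\<close> False right S by simp
  qed
qed

end

lemma bst_splay: "bst t \<Longrightarrow> bst (splay x t)"
  by (simp add: bst_iff_sorted_wrt_less)

lemma tree_weight_eq_sum: "bst t \<Longrightarrow> tree_weight w t = sum w (set_tree t)"
  by (metis bst_iff_sorted_wrt_less strict_sorted_iff set_inorder tree_weight_def
      sum_list_distinct_conv_sum_set)

lemma sum_subtree_ranks_eq_potential:
  "bst t \<Longrightarrow> (\<Sum>u\<in>set_tree t. log 2 (\<Sum>y\<in>set_tree (subtree_at t u). w y)) = potential w t"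
proof (induction t)
  case (Node l a r)
  let ?rank = "\<lambda>t u. log 2 (\<Sum>y\<in>set_tree (subtree_at t u). w y)"
  have lt: "\<forall>u\<in>set_tree l. u < a" and gt: "\<forall>u\<in>set_tree r. a < u"
    using Node.prems by auto
  then have "a \<notin> set_tree l \<union> set_tree r" "set_tree l \<inter> set_tree r = {}"
    by fastforce+
  then have "(\<Sum>u\<in>set_tree (Node l a r). ?rank (Node l a r) u)
      = ?rank (Node l a r) a + (\<Sum>u\<in>set_tree l. ?rank (Node l a r) u)
        + (\<Sum>u\<in>set_tree r. ?rank (Node l a r) u)"
    by (simp add: sum.union_disjoint)
  also have "(\<Sum>u\<in>set_tree l. ?rank (Node l a r) u) = (\<Sum>u\<in>set_tree l. ?rank l u)"
    using lt by (intro sum.cong) auto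
  also have "(\<Sum>u\<in>set_tree r. ?rank (Node l a r) u) = (\<Sum>u\<in>set_tree r. ?rank r u)"
    using gt by (intro sum.cong) (auto dest: less_asym)
  finally show ?case
    using Node tree_weight_eq_sum[OF Node.prems] by simp
qed simp

lemma pot_eq_potential: "bst X \<Longrightarrow> pot T X = potential (weight T) X"
  by (simp add: pot_def wsize_def sum_subtree_ranks_eq_potential)

lemma sum_weight_le_2: "bst t \<Longrightarrow> (\<Sum>u\<in>set_tree t. weight t u) \<le> 2"
proof (induction t)
  case (Node l a r)
  have lt: "\<forall>u\<in>set_tree l. u < a" and gt: "\<forall>u\<in>set_tree r. a < u"
    using Node.prems by auto
  then have "a \<notin> set_tree l \<union> set_tree r" "set_tree l \<inter> set_tree r = {}"
    by fastforce+
  then have "(\<Sum>u\<in>set_tree (Node l a r). weight (Node l a r) u)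
      = 1 + (\<Sum>u\<in>set_tree l. weight (Node l a r) u) + (\<Sum>u\<in>set_tree r. weight (Node l a r) u)"
    by (simp add: sum.union_disjoint weight_def)
  also have "(\<Sum>u\<in>set_tree l. weight (Node l a r) u) = (\<Sum>u\<in>set_tree l. weight l u) / 4"
    unfolding sum_divide_distrib using lt by (intro sum.cong) (auto simp: weight_def)
  also have "(\<Sum>u\<in>set_tree r. weight (Node l a r) u) = (\<Sum>u\<in>set_tree r. weight r u) / 4"
    unfolding sum_divide_distrib using gt by (intro sum.cong) (auto simp: weight_def dest: less_asym)
  finally show ?case
    using Node by simp
qed simp

lemma log_weight: "log 2 (weight T v) = - 2 * real (key_depth T v)"
proof -
  have "weight T v = 1 / 2 ^ (2 * key_depth T v)"
    by (simp add: weight_def power_mult)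
  then show ?thesis
    by (simp add: log_divide_pos log_pow_cancel)
qed

theorem lemma4p4:
  fixes T S :: "'a::linorder tree" and v :: 'a
  assumes "bst T" and "bst S" and "set_tree T = set_tree S" and "v \<in> set_tree S"
  shows "splay_amortized_cost T S v \<le> 4 + 6 * real (key_depth T v)"
proof -
  have w_pos: "\<And>y. 0 < weight T y"
    by (simp add: weight_def)
  have cost: "splay_amortized_cost T S v
      = potential (weight T) (splay v S) - potential (weight T) S + key_depth S v"
    using pot_eq_potential[OF assms(2)] pot_eq_potential[OF bst_splay[OF assms(2)]]
    by (simp add: splay_amortized_cost_def Phi_def)
  have "tree_weight (weight T) S \<le> 2"
    using sum_weight_le_2[OF assms(1)] assms(2,3) by (simp add: tree_weight_eq_sum)
  moreover have "0 < tree_weight (weight T) S"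
    using assms(4) tree_weight_Node_pos[of "weight T", OF w_pos] by (cases S) auto
  ultimately have "log 2 (tree_weight (weight T) S) \<le> 1"
    by simp
  then show ?thesis
    using splay_access[of "weight T", OF w_pos assms(2,4)] cost log_weight[of T v] by argo
qed

end
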